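(* Let $p>6$ and assume $h$ satisfies $(h_1)$. For every $u\in\mathcal{M}_{s,2}$ and every $(r,t)\in(0,\infty)\times(0,\infty)$ with $(r,t)\neq(1,1)$, we have $J_{s,2}(u)>J_{s,2}(ru^++tu^-)$.
   Context: Let $d\ge 1$ and $s\in(0,1)$. $\mathbb{Z}^d$ is the integer lattice graph (vertices $\mathbb{Z}^d$, edges between $x,y$ with $\sum_i|x_i-y_i|=1$), with graph distance $|x-y|=\sum_{i=1}^d|x_i-y_i|$ and counting measure $\mu$; $\int_{\mathbb{Z}^d}f\,d\mu:=\sum_{x\in\mathbb{Z}^d}f(x)$. The weight $w_s(x,y)$, defined for $x\neq y$, is symmetric, positive, and satisfies $c_{s,d}|x-y|^{-d-2s}\le w_s(x,y)\le C_{s,d}|x-y|^{-d-2s}$ for some constants $0<c_{s,d}\le C_{s,d}$. For $u,v:\mathbb{Z}^d\to\mathbb{R}$ set $\nabla^s u\nabla^s v(x)=\frac12\sum_{y\neq x}w_s(x,y)(u(x)-u(y))(v(x)-v(y))$, $|\nabla^s u|^2(x)=\nabla^s u\nabla^s u(x)$, $\|\nabla^s u\|_2^2:=\int_{\mathbb{Z}^d}|\nabla^s u|^2d\mu$, and $(-\Delta)^s u(x)=\sum_{y\neq x}w_s(x,y)(u(x)-u(y))$; $\|u\|_q$ denotes the $\ell^q(\mathbb{Z}^d)$ norm. Fix constants $a,b>0$ and $p>2$. The potential $h:\mathbb{Z}^d\to\mathbb{R}$ may satisfy: $(h_1)$ there is $h_0>0$ with $h(x)\ge h_0$ for all $x$;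 $(h_2)$ there is $x_0\in\mathbb{Z}^d$ with $h(x)\to\infty$ as $|x-x_0|\to\infty$. $W^{s,2}(\mathbb{Z}^d)$ is the completion of finitely supported functions under $\|u\|_{W^{s,2}}^2=\int(|\nabla^s u|^2+u^2)d\mu$, and $H^{s,2}=\{u\in W^{s,2}:\int h u^2d\mu<\infty\}$ is the Hilbert space with inner product $\langle u,v\rangle_{H^{s,2}}=\int(a\nabla^s u\nabla^s v+huv)d\mu$ and norm $\|u\|_{H^{s,2}}$. Equation (E) is $\left(a+b\int_{\mathbb{Z}^d}|\nabla^s u|^2d\mu\right)(-\Delta)^s u+h(x)u=|u|^{p-2}u\log u^2$ on $\mathbb{Z}^d$ (with $|t|^{p-2}t\log t^2:=0$ at $t=0$). The energy is $J_{s,2}(u)=\frac12\|u\|_{H^{s,2}}^2+\frac b4\|\nabla^s u\|_2^4+\frac{2}{p^2}\int|u|^pd\mu-\frac1p\int|u|^p\log u^2d\mu$, a $C^1$ functional on $H^{s,2}$ with $\langle J_{s,2}'(u),\phi\rangle=\int(a\nabla^s u\nabla^s\phi+hu\phi)d\mu+b\|\nabla^s u\|_2^2\int\nabla^s u\nabla^s\phi\,d\mu-\int|u|^{p-2}u\phi\log u^2d\mu$. A weak solution is a critical point of $J_{s,2}$; nontrivial means $\neq0$. $u^+=\max\{u,0\}$, $u^-=\min\{u,0\}$. Nehari manifold: $\mathcal{N}_{s,2}=\{v\in H^{s,2}\setminus\{0\}:\langle J_{s,2}'(v),v\rangle=0\}$. Sign-changing Nehari set: $\mathcal{M}_{s,2}=\{v\in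 H^{s,2}: v^\pm\neq0,\ \langle J_{s,2}'(v),v^+\rangle=\langle J_{s,2}'(v),v^-\rangle=0\}$. A ground state solution is a nontrivial weak solution $u$ with $J_{s,2}(u)=\inf_{\mathcal{N}_{s,2}}J_{s,2}$; a sign-changing solution is a weak solution $u$ with $u^\pm\not\equiv0$; a ground state sign-changing solution is a sign-changing solution $u$ with $J_{s,2}(u)=\inf_{\mathcal{M}_{s,2}}J_{s,2}$. For $u\in H^{s,2}$, $K(u)=\sum_{x}\sum_{y\neq x}w_s(x,y)[u^+(y)u^-(x)+u^-(y)u^+(x)]$. *)

theory Defs
  imports "HOL-Analysis.Analysis"
begin

text \<open>The lattice Z^d is rendered as the type int ^ 'd, with d = CARD('d).
  Integrals against counting measure are infinite sums (infsum).\<close>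

type_synonym 'd lattice = "int ^ 'd"

definition ldist :: "'d::finite lattice \<Rightarrow> 'd lattice \<Rightarrow> real" where
  "ldist x y = (\<Sum>i\<in>UNIV. real_of_int \<bar>x $ i - y $ i\<bar>)"

definition frac_weight :: "real \<Rightarrow> ('d::finite lattice \<Rightarrow> 'd lattice \<Rightarrow> real) \<Rightarrow> bool" where
  "frac_weight s w \<longleftrightarrow>
     (\<forall>x y. x \<noteq> y \<longrightarrow> w x y = w y x \<and> w x y > 0) \<and>
     (\<exists>c C. 0 < c \<and> c \<le> C \<and>
        (\<forall>x y. x \<noteq> y \<longrightarrow>
           c * ldist x y powr (- real CARD('d) - 2 * s) \<le> w x y \<and>
           w x y \<le> C * ldist x y powr (- real CARD('d) - 2 * s)))"

definition grad_prod :: "('d::finite lattice \<Rightarrow> 'd lattice \<Rightarrow> real) \<Rightarrow>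
    ('d lattice \<Rightarrow> real) \<Rightarrow> ('d lattice \<Rightarrow> real) \<Rightarrow> 'd lattice \<Rightarrow> real" where
  "grad_prod w u v x = 1/2 * (\<Sum>\<^sub>\<infinity>y\<in>UNIV - {x}. w x y * (u x - u y) * (v x - v y))"

definition grad_norm2 :: "('d::finite lattice \<Rightarrow> 'd lattice \<Rightarrow> real) \<Rightarrow> ('d lattice \<Rightarrow> real) \<Rightarrow> real" where
  "grad_norm2 w u = (\<Sum>\<^sub>\<infinity>x\<in>UNIV. grad_prod w u u x)"

definition W_dens :: "('d::finite lattice \<Rightarrow> 'd lattice \<Rightarrow> real) \<Rightarrow> ('d lattice \<Rightarrow> real) \<Rightarrow> 'd lattice \<Rightarrow> real" where
  "W_dens w u x = grad_prod w u u x + (u x)\<^sup>2"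

definition W_norm2 :: "('d::finite lattice \<Rightarrow> 'd lattice \<Rightarrow> real) \<Rightarrow> ('d lattice \<Rightarrow> real) \<Rightarrow> real" where
  "W_norm2 w u = (\<Sum>\<^sub>\<infinity>x\<in>UNIV. W_dens w u x)"

text \<open>W^{s,2}: completion of finitely supported functions under the W norm,
  realised as the functions that are W-norm limits of finitely supported functions.\<close>
definition W_space :: "('d::finite lattice \<Rightarrow> 'd lattice \<Rightarrow> real) \<Rightarrow> ('d lattice \<Rightarrow> real) set" where
  "W_space w = {u. (\<forall>x. (\<lambda>y. w x y * (u x - u y)\<^sup>2) summable_on (UNIV - {x})) \<and>
      W_dens w u summable_on UNIV \<and>
      (\<exists>U :: nat \<Rightarrow> 'd lattice \<Rightarrow> real.
         (\<forall>n. finite {x. U n x \<noteq> 0}) \<and>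
         (\<forall>n. W_dens w (\<lambda>x. U n x - u x) summable_on UNIV) \<and>
         (\<lambda>n. W_norm2 w (\<lambda>x. U n x - u x)) \<longlonglongrightarrow> 0)}"

definition H_space :: "('d::finite lattice \<Rightarrow> 'd lattice \<Rightarrow> real) \<Rightarrow> ('d lattice \<Rightarrow> real) \<Rightarrow>
    ('d lattice \<Rightarrow> real) set" where
  "H_space w h = {u \<in> W_space w. (\<lambda>x. h x * (u x)\<^sup>2) summable_on UNIV}"

definition H_inner :: "real \<Rightarrow> ('d::finite lattice \<Rightarrow> 'd lattice \<Rightarrow> real) \<Rightarrow> ('d lattice \<Rightarrow> real) \<Rightarrow>
    ('d lattice \<Rightarrow> real) \<Rightarrow> ('d lattice \<Rightarrow> real) \<Rightarrow> real" where
  "H_inner a w h u v = (\<Sum>\<^sub>\<infinity>x\<in>UNIV. a * grad_prod w u v x + h x * u x * v x)"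

definition nonlin :: "real \<Rightarrow> real \<Rightarrow> real" where
  "nonlin p t = (if t = 0 then 0 else \<bar>t\<bar> powr (p - 2) * t * ln (t\<^sup>2))"

definition J_fun :: "real \<Rightarrow> real \<Rightarrow> real \<Rightarrow> ('d::finite lattice \<Rightarrow> 'd lattice \<Rightarrow> real) \<Rightarrow>
    ('d lattice \<Rightarrow> real) \<Rightarrow> ('d lattice \<Rightarrow> real) \<Rightarrow> real" where
  "J_fun a b p w h u =
     1/2 * H_inner a w h u u + b/4 * (grad_norm2 w u)\<^sup>2
     + 2 / p\<^sup>2 * (\<Sum>\<^sub>\<infinity>x\<in>UNIV. \<bar>u x\<bar> powr p)
     - 1 / p * (\<Sum>\<^sub>\<infinity>x\<in>UNIV. (if u x = 0 then 0 else \<bar>u x\<bar> powr p * ln ((u x)\<^sup>2)))"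

definition J_deriv :: "real \<Rightarrow> real \<Rightarrow> real \<Rightarrow> ('d::finite lattice \<Rightarrow> 'd lattice \<Rightarrow> real) \<Rightarrow>
    ('d lattice \<Rightarrow> real) \<Rightarrow> ('d lattice \<Rightarrow> real) \<Rightarrow> ('d lattice \<Rightarrow> real) \<Rightarrow> real" where
  "J_deriv a b p w h u \<phi> =
     H_inner a w h u \<phi> + b * grad_norm2 w u * (\<Sum>\<^sub>\<infinity>x\<in>UNIV. grad_prod w u \<phi> x)
     - (\<Sum>\<^sub>\<infinity>x\<in>UNIV. nonlin p (u x) * \<phi> x)"

definition pos_part :: "('d lattice \<Rightarrow> real) \<Rightarrow> 'd lattice \<Rightarrow> real" where
  "pos_part u = (\<lambda>x. max (u x) 0)"

definition neg_part :: "('d lattice \<Rightarrow> real) \<Rightarrow> 'd lattice \<Rightarrow> real" where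
  "neg_part u = (\<lambda>x. min (u x) 0)"

definition M_set :: "real \<Rightarrow> real \<Rightarrow> real \<Rightarrow> ('d::finite lattice \<Rightarrow> 'd lattice \<Rightarrow> real) \<Rightarrow>
    ('d lattice \<Rightarrow> real) \<Rightarrow> ('d lattice \<Rightarrow> real) set" where
  "M_set a b p w h = {v \<in> H_space w h. pos_part v \<noteq> (\<lambda>x. 0) \<and> neg_part v \<noteq> (\<lambda>x. 0) \<and>
       J_deriv a b p w h v (pos_part v) = 0 \<and> J_deriv a b p w h v (neg_part v) = 0}"

end

(*
  Write u = u^+ + u^-. Since the two parts have disjoint supports, J(r u^+ + t u^-) is an explicit
  function of r, t and nine numbers: the Dirichlet energies of u^+ and u^-, their cross term
  (nonnegative, it is -K(u)/2), the potential energies, the integrals of |u^+|^p and |u^-|^p, and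
  those of |u^+|^p log (u^+)^2 and |u^-|^p log (u^-)^2. The two Nehari identities eliminate the
  last two, after which J(u) - J(r u^+ + t u^-) is a sum of terms that are nonnegative by
  Bernoulli's inequality, in the form (1 - r^p)/p <= (1 - r^k)/k for k = 2, 4 < p, and by
  1 - y + y log y >= 0; one of these terms is strictly positive unless r = t = 1.
*)

theory Submission
  imports Defs
begin

section \<open>Elementary inequalities\<close>

lemma powr_gt_bernoulli:
  fixes x \<alpha> :: real
  assumes "0 < x" "x \<noteq> 1" "1 < \<alpha>"
  shows "1 + \<alpha> * (x - 1) < x powr \<alpha>"
proof -
  define f where "f y = y powr \<alpha> - \<alpha> * y" for y :: real
  have f': "(f has_real_derivative \<alpha> * (y powr (\<alpha> - 1) - 1)) (at y)" if "0 < y" for y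
    unfolding f_def using that by (auto intro!: derivative_eq_intros simp: algebra_simps)
  have "f 1 < f x"
  proof (cases "x < 1")
    case True
    obtain z where z: "x < z" "z < 1" "f 1 - f x = (1 - x) * (\<alpha> * (z powr (\<alpha> - 1) - 1))"
      using MVT2[of x 1 f "\<lambda>y. \<alpha> * (y powr (\<alpha> - 1) - 1)"] True f' assms(1) by force
    have "z powr (\<alpha> - 1) < 1 powr (\<alpha> - 1)"
      using z assms(1,3) by (intro powr_less_mono2) auto
    then have "(1 - x) * (\<alpha> * (z powr (\<alpha> - 1) - 1)) < 0"
      using True assms(3) by (intro mult_pos_neg mult_pos_neg) auto
    with z show ?thesis by simp
  next
    case False
    with assms(2) have "1 < x" by simp
    then obtain z where z: "1 < z" "z < x" "f x - f 1 = (x - 1) * (\<alpha> * (z powr (\<alpha> - 1) - 1))"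
      using MVT2[of 1 x f "\<lambda>y. \<alpha> * (y powr (\<alpha> - 1) - 1)"] f' by force
    have "1 < z powr (\<alpha> - 1)"
      using z assms(3) by (simp add: gr_one_powr)
    then have "0 < (x - 1) * (\<alpha> * (z powr (\<alpha> - 1) - 1))"
      using \<open>1 < x\<close> assms(3) by (intro mult_pos_pos) auto
    with z show ?thesis by simp
  qed
  then show ?thesis by (simp add: f_def algebra_simps)
qed

lemma one_minus_powr_div_less:
  fixes r k p :: real
  assumes "0 < r" "r \<noteq> 1" "0 < k" "k < p"
  shows "(1 - r powr p) / p < (1 - r powr k) / k"
proof -
  have "r powr k \<noteq> 1"
    using assms ln_powr[of r k] by (metis ln_one ln_eq_zero_iff mult_eq_0_iff order_less_irrefl)
  then have "1 + p / k * (r powr k - 1) < (r powr k) powr (p / k)"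
    using assms by (intro powr_gt_bernoulli) auto
  also have "\<dots> = r powr p"
    using assms by (simp add: powr_powr)
  finally show ?thesis
    using assms by (simp add: field_simps)
qed

lemma one_minus_powr_div_le:
  fixes r k p :: real
  assumes "0 < r" "0 < k" "k < p"
  shows "(1 - r powr p) / p \<le> (1 - r powr k) / k"
  using one_minus_powr_div_less[OF assms(1) _ assms(2,3)] by (cases "r = 1") auto

lemma one_minus_add_mult_ln_nonneg:
  fixes y :: real
  assumes "0 < y"
  shows "0 \<le> 1 - y + y * ln y"
proof -
  have "- ln y \<le> 1 / y - 1"
    using ln_le_minus_one[of "1 / y"] assms by (simp add: ln_div)
  then have "y * (- ln y) \<le> y * (1 / y - 1)"
    using assms by (intro mult_left_mono) auto
  also have "\<dots> = 1 - y"
    using assms by (simp add: field_simps)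
  finally show ?thesis
    by simp
qed

lemma kirchhoff_term_nonneg:
  fixes X\<^sub>1 X\<^sub>2 C r t R T p :: real
  assumes "0 \<le> X\<^sub>1" "0 \<le> X\<^sub>2" "0 \<le> C" "0 < r" "0 < t" "0 < p"
    and "(1 - R) / p \<le> (1 - r^4) / 4" "(1 - T) / p \<le> (1 - t^4) / 4"
  shows "0 \<le> (X\<^sub>1 + X\<^sub>2 + 2 * C)^2 / 4 - (r^2 * X\<^sub>1 + t^2 * X\<^sub>2 + 2 * r * t * C)^2 / 4
    - (X\<^sub>1 + X\<^sub>2 + 2 * C) * ((1 - R) * (X\<^sub>1 + C) + (1 - T) * (X\<^sub>2 + C)) / p"
proof -
  define X where "X = X\<^sub>1 + C"
  define Y where "Y = X\<^sub>2 + C"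
  define D where "D = r^2 * X\<^sub>1 + t^2 * X\<^sub>2 + 2 * r * t * C"
  have XY: "0 \<le> X" "0 \<le> Y" "X\<^sub>1 + X\<^sub>2 + 2 * C = X + Y"
    using assms(1-3) by (simp_all add: X_def Y_def)
  have "(X + Y) * ((1 - R) * X + (1 - T) * Y) / p = (X + Y) * (X * ((1 - R) / p) + Y * ((1 - T) / p))"
    using assms(6) by (simp add: field_simps)
  also have "\<dots> \<le> (X + Y) * (X * ((1 - r^4) / 4) + Y * ((1 - t^4) / 4))"
    using XY assms(7,8) by (intro mult_left_mono add_mono) auto
  finally have lin: "(X + Y) * ((1 - R) * X + (1 - T) * Y) / p
      \<le> (X + Y) * (X * ((1 - r^4) / 4) + Y * ((1 - t^4) / 4))" .
  have "2 * r * t * C \<le> r^2 * C + t^2 * C"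
    using sum_squares_bound[of r t] assms(3) by (simp add: distrib_right[symmetric] mult_right_mono)
  then have "0 \<le> D" "D \<le> r^2 * X + t^2 * Y"
    using assms(1-5) by (simp_all add: D_def X_def Y_def algebra_simps)
  then have "D^2 \<le> (r^2 * X + t^2 * Y)^2"
    by (intro power_mono) auto
  moreover have "(X + Y)^2 / 4 - (r^2 * X + t^2 * Y)^2 / 4 - (X + Y) * (X * ((1 - r^4) / 4) + Y * ((1 - t^4) / 4))
      = X * Y * (r^2 - t^2)^2 / 4"
    by (simp add: field_simps power2_eq_square eval_nat_numeral)
  moreover have "0 \<le> X * Y * (r^2 - t^2)^2 / 4"
    using XY by simp
  ultimately show ?thesis
    unfolding XY(3) D_def[symmetric] X_def[symmetric] Y_def[symmetric] using lin by linarith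
qed

section \<open>The fibering map\<close>

text \<open>This is J(r u^+ + t u^-) when X1, X2 are the Dirichlet energies of u^+ and u^-, C is their
  cross term, H1, H2 are the potential energies, P1, P2 the integrals of |u^+|^p and |u^-|^p, and
  L1, L2 those of |u^+|^p log (u^+)^2 and |u^-|^p log (u^-)^2.\<close>

definition fibering_map :: "real \<Rightarrow> real \<Rightarrow> real \<Rightarrow> real \<Rightarrow> real \<Rightarrow> real \<Rightarrow> real \<Rightarrow> real \<Rightarrow>
    real \<Rightarrow> real \<Rightarrow> real \<Rightarrow> real \<Rightarrow> real \<Rightarrow> real \<Rightarrow> real" where
  "fibering_map a b p X\<^sub>1 X\<^sub>2 C H\<^sub>1 H\<^sub>2 P\<^sub>1 P\<^sub>2 L\<^sub>1 L\<^sub>2 r t =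
     1/2 * (a * (r^2 * X\<^sub>1 + t^2 * X\<^sub>2 + 2 * r * t * C) + r^2 * H\<^sub>1 + t^2 * H\<^sub>2)
     + b/4 * (r^2 * X\<^sub>1 + t^2 * X\<^sub>2 + 2 * r * t * C)^2
     + 2 / p^2 * (r powr p * P\<^sub>1 + t powr p * P\<^sub>2)
     - 1 / p * (r powr p * (L\<^sub>1 + ln (r^2) * P\<^sub>1) + t powr p * (L\<^sub>2 + ln (t^2) * P\<^sub>2))"

locale nehari_fibering =
  fixes a b p X\<^sub>1 X\<^sub>2 C H\<^sub>1 H\<^sub>2 P\<^sub>1 P\<^sub>2 L\<^sub>1 L\<^sub>2 :: real
  assumes a_pos: "0 < a" and b_pos: "0 < b" and p_gt_4: "4 < p"
    and grad_nonneg: "0 \<le> X\<^sub>1" "0 \<le> X\<^sub>2" "0 \<le> C"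
    and powr_nonneg: "0 \<le> P\<^sub>1" "0 \<le> P\<^sub>2"
    and quadratic_pos: "0 < a * X\<^sub>1 + H\<^sub>1" "0 < a * X\<^sub>2 + H\<^sub>2"
    and nehari_pos: "a * (X\<^sub>1 + C) + H\<^sub>1 + b * (X\<^sub>1 + X\<^sub>2 + 2 * C) * (X\<^sub>1 + C) = L\<^sub>1"
    and nehari_neg: "a * (X\<^sub>2 + C) + H\<^sub>2 + b * (X\<^sub>1 + X\<^sub>2 + 2 * C) * (X\<^sub>2 + C) = L\<^sub>2"
begin

abbreviation fiber :: "real \<Rightarrow> real \<Rightarrow> real" where
  "fiber \<equiv> fibering_map a b p X\<^sub>1 X\<^sub>2 C H\<^sub>1 H\<^sub>2 P\<^sub>1 P\<^sub>2 L\<^sub>1 L\<^sub>2"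

lemma fiber_less_fiber_one_one:
  assumes r: "0 < r" and t: "0 < t" and rt: "(r, t) \<noteq> (1, 1)"
  shows "fiber r t < fiber 1 1"
proof -
  have p: "0 < p" using p_gt_4 by simp
  define R where "R = r powr p"
  define T where "T = t powr p"
  define g\<^sub>1 where "g\<^sub>1 = (1 - r^2) / 2 - (1 - R) / p"
  define g\<^sub>2 where "g\<^sub>2 = (1 - t^2) / 2 - (1 - T) / p"
  define k\<^sub>1 where "k\<^sub>1 = 1 - R + p/2 * R * ln (r^2)"
  define k\<^sub>2 where "k\<^sub>2 = 1 - T + p/2 * T * ln (t^2)"
  define m where "m = (1 - r * t) - (1 - R) / p - (1 - T) / p"
  define Q where "Q = (X\<^sub>1 + X\<^sub>2 + 2 * C)^2 / 4 - (r^2 * X\<^sub>1 + t^2 * X\<^sub>2 + 2 * r * t * C)^2 / 4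
    - (X\<^sub>1 + X\<^sub>2 + 2 * C) * ((1 - R) * (X\<^sub>1 + C) + (1 - T) * (X\<^sub>2 + C)) / p"
  \<comment> \<open>Eliminating the logarithmic terms by the Nehari identities splits the difference
    into terms of known sign.\<close>
  have decomposition: "fiber 1 1 - fiber r t
      = g\<^sub>1 * (a * X\<^sub>1 + H\<^sub>1) + g\<^sub>2 * (a * X\<^sub>2 + H\<^sub>2) + a * C * m + b * Q + 2 / p^2 * (k\<^sub>1 * P\<^sub>1 + k\<^sub>2 * P\<^sub>2)"
    unfolding fibering_map_def
    unfolding R_def[symmetric] T_def[symmetric] g\<^sub>1_def g\<^sub>2_def k\<^sub>1_def k\<^sub>2_def m_def Q_def
      nehari_pos[symmetric] nehari_neg[symmetric]
    using p by (simp add: field_simps power2_eq_square)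
  have g\<^sub>1: "0 \<le> g\<^sub>1" and g\<^sub>2: "0 \<le> g\<^sub>2"
    using one_minus_powr_div_le[of _ 2 p] r t p_gt_4 by (simp_all add: g\<^sub>1_def g\<^sub>2_def R_def T_def)
  have "0 < g\<^sub>1 \<or> 0 < g\<^sub>2"
    using one_minus_powr_div_less[of _ 2 p] r t p_gt_4 rt by (auto simp: g\<^sub>1_def g\<^sub>2_def R_def T_def)
  then have "0 < g\<^sub>1 * (a * X\<^sub>1 + H\<^sub>1) + g\<^sub>2 * (a * X\<^sub>2 + H\<^sub>2)"
    using g\<^sub>1 g\<^sub>2 quadratic_pos by (auto intro: add_pos_nonneg add_nonneg_pos)
  moreover have "0 \<le> a * C * m"
  proof -
    have "m = g\<^sub>1 + g\<^sub>2 + (r - t)^2 / 2"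
      by (simp add: m_def g\<^sub>1_def g\<^sub>2_def field_simps power2_eq_square)
    then show ?thesis
      using a_pos grad_nonneg(3) g\<^sub>1 g\<^sub>2 by simp
  qed
  moreover have "0 \<le> b * Q"
  proof -
    have "(1 - R) / p \<le> (1 - r^4) / 4" "(1 - T) / p \<le> (1 - t^4) / 4"
      using one_minus_powr_div_le[of _ 4 p] r t p_gt_4 by (simp_all add: R_def T_def)
    then show ?thesis
      unfolding Q_def using kirchhoff_term_nonneg[OF grad_nonneg r t p] b_pos by simp
  qed
  moreover have "0 \<le> k\<^sub>1" "0 \<le> k\<^sub>2"
    using one_minus_add_mult_ln_nonneg[of R] one_minus_add_mult_ln_nonneg[of T] r t
    by (simp_all add: k\<^sub>1_def k\<^sub>2_def R_def T_def ln_powr ln_realpow mult.left_commute)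
  then have "0 \<le> 2 / p^2 * (k\<^sub>1 * P\<^sub>1 + k\<^sub>2 * P\<^sub>2)"
    using powr_nonneg by simp
  ultimately show ?thesis
    using decomposition by linarith
qed

end

section \<open>Splitting a function into its positive and negative parts\<close>

lemma summable_on_abs_le:
  fixes f g :: "'a \<Rightarrow> real"
  assumes "g summable_on A" "\<And>x. x \<in> A \<Longrightarrow> \<bar>f x\<bar> \<le> g x"
  shows "f summable_on A"
proof -
  have "(\<lambda>x. norm (f x)) summable_on A"
    using assms by (intro summable_on_comparison_test[OF assms(1)]) auto
  then show ?thesis
    by (rule abs_summable_summable)
qed

lemma summable_on_weighted_le:
  fixes w f g :: "'a \<Rightarrow> real"
  assumes "(\<lambda>y. w y * g y) summable_on A" "\<And>y. y \<in> A \<Longrightarrow> 0 \<le> w y"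
    and "\<And>y. 0 \<le> f y" "\<And>y. f y \<le> g y"
  shows "(\<lambda>y. w y * f y) summable_on A"
  using assms by (intro summable_on_comparison_test[OF assms(1)]) (auto intro: mult_left_mono)

lemma abs_le_sqrt_infsum_square:
  fixes f :: "'a \<Rightarrow> real"
  assumes "(\<lambda>x. (f x)^2) summable_on UNIV"
  shows "\<bar>f x\<bar> \<le> sqrt (\<Sum>\<^sub>\<infinity>y. (f y)^2)"
proof -
  have "(f x)^2 \<le> (\<Sum>\<^sub>\<infinity>y. (f y)^2)"
    using finite_sum_le_infsum[OF assms, of "{x}"] by simp
  then show ?thesis
    using real_sqrt_le_mono by fastforce
qed

lemma pos_part_add_neg_part: "pos_part u x + neg_part u x = u x"
  by (simp add: pos_part_def neg_part_def)

lemma pos_part_eq_0_or_neg_part_eq_0: "pos_part u x = 0 \<or> neg_part u x = 0"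
  by (simp add: pos_part_def neg_part_def max_def min_def)

lemma square_pos_part_le: "(pos_part u x)^2 \<le> (u x)^2"
  and square_neg_part_le: "(neg_part u x)^2 \<le> (u x)^2"
  by (auto simp: pos_part_def neg_part_def max_def min_def)

text \<open>Pointwise form of K(u) \<le> 0.\<close>

lemma pos_neg_part_increments_nonneg:
  "0 \<le> (pos_part u x - pos_part u y) * (neg_part u x - neg_part u y)"
  by (auto simp: pos_part_def neg_part_def max_def min_def mult_nonneg_nonpos mult_nonpos_nonneg
      intro: mult_nonpos_nonpos)

lemma square_increment_split:
  "(u x - u y)^2 = (pos_part u x - pos_part u y)^2 + (neg_part u x - neg_part u y)^2
     + 2 * ((pos_part u x - pos_part u y) * (neg_part u x - neg_part u y))"
  by (simp add: pos_part_add_neg_part[of u, symmetric] power2_eq_square algebra_simps)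

locale sign_split =
  fixes w :: "'d::finite lattice \<Rightarrow> 'd lattice \<Rightarrow> real" and u :: "'d lattice \<Rightarrow> real"
  assumes weight_pos: "\<And>x y. x \<noteq> y \<Longrightarrow> 0 < w x y"
    and in_W_space: "u \<in> W_space w"
begin

abbreviation "P \<equiv> pos_part u"
abbreviation "N \<equiv> neg_part u"

lemma local_energy_summable: "(\<lambda>y. w x y * (u x - u y)^2) summable_on (UNIV - {x})"
  and W_dens_summable: "W_dens w u summable_on UNIV"
  using in_W_space unfolding W_space_def mem_Collect_eq by blast+

lemma square_part_le:
  assumes "f \<in> {P, N}"
  shows "(f x)^2 \<le> (u x)^2"
  using assms square_pos_part_le[of u x] square_neg_part_le[of u x] by blast

lemma increment_products_bounded:
  assumes "f \<in> {P, N}" "g \<in> {P, N}"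
  shows "0 \<le> (f x - f y) * (g x - g y)" "(f x - f y) * (g x - g y) \<le> (u x - u y)^2"
proof -
  let ?dP = "P x - P y" and ?dN = "N x - N y"
  have "0 \<le> ?dP * ?dN" "0 \<le> ?dP * ?dP" "0 \<le> ?dN * ?dN"
    using pos_neg_part_increments_nonneg by simp_all
  moreover have "(u x - u y)^2 = ?dP * ?dP + ?dN * ?dN + 2 * (?dP * ?dN)"
    using square_increment_split by (simp add: power2_eq_square)
  ultimately show "0 \<le> (f x - f y) * (g x - g y)" "(f x - f y) * (g x - g y) \<le> (u x - u y)^2"
    using assms by (auto simp: mult.commute[of ?dN ?dP])
qed

lemma grad_terms_summable:
  assumes "f \<in> {P, N}" "g \<in> {P, N}"
  shows "(\<lambda>y. w x y * (f x - f y) * (g x - g y)) summable_on (UNIV - {x})"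
  using summable_on_weighted_le[where w = "w x", OF local_energy_summable
      _ increment_products_bounded[OF assms]] weight_pos
  by (simp add: mult.assoc less_imp_le)

lemma grad_prod_nonneg:
  assumes "f \<in> {P, N}" "g \<in> {P, N}"
  shows "0 \<le> grad_prod w f g x"
proof -
  have "0 \<le> w x y * (f x - f y) * (g x - g y)" if "y \<in> UNIV - {x}" for y
    using weight_pos[of x y] increment_products_bounded(1)[OF assms, of x y] that
    by (simp add: mult.assoc)
  then have "0 \<le> (\<Sum>\<^sub>\<infinity>y\<in>UNIV - {x}. w x y * (f x - f y) * (g x - g y))"
    by (rule infsum_nonneg)
  then show ?thesis
    unfolding grad_prod_def by simp
qed

lemma grad_prod_split:
  assumes v: "\<And>x. v x = r * P x + t * N x" and \<phi>: "\<And>x. \<phi> x = r' * P x + t' * N x"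
  shows "grad_prod w v \<phi> x
    = r * r' * grad_prod w P P x + t * t' * grad_prod w N N x + (r * t' + t * r') * grad_prod w P N x"
proof -
  let ?S = "\<lambda>f g. \<Sum>\<^sub>\<infinity>y\<in>UNIV - {x}. w x y * (f x - f y) * (g x - g y)"
  have "w x y * (v x - v y) * (\<phi> x - \<phi> y)
      = r * r' * (w x y * (P x - P y) * (P x - P y)) + t * t' * (w x y * (N x - N y) * (N x - N y))
        + (r * t' + t * r') * (w x y * (P x - P y) * (N x - N y))" for y
    by (simp add: v \<phi> algebra_simps)
  then have "((\<lambda>y. w x y * (v x - v y) * (\<phi> x - \<phi> y)) has_sum
      (r * r' * ?S P P + t * t' * ?S N N + (r * t' + t * r') * ?S P N)) (UNIV - {x})"
    by (simp only:) (intro has_sum_add has_sum_cmult_right has_sum_infsum grad_terms_summable; simp)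
  then show ?thesis
    by (simp add: grad_prod_def has_sum_iff algebra_simps)
qed

lemma self_as_combination: "u x = 1 * P x + 1 * N x"
  and pos_part_as_combination: "P x = 1 * P x + 0 * N x"
  and neg_part_as_combination: "N x = 0 * P x + 1 * N x"
  by (simp_all add: pos_part_add_neg_part)

lemma grad_prod_self_split:
  "grad_prod w u u x = grad_prod w P P x + grad_prod w N N x + 2 * grad_prod w P N x"
  using grad_prod_split[OF self_as_combination self_as_combination, of x] by simp

lemma grad_prod_part_le:
  assumes "f \<in> {P, N}" "g \<in> {P, N}"
  shows "grad_prod w f g x \<le> grad_prod w u u x"
proof -
  have "grad_prod w N P x = grad_prod w P N x"
    unfolding grad_prod_def by (simp add: mult_ac)
  moreover have "0 \<le> grad_prod w P P x" "0 \<le> grad_prod w N N x" "0 \<le> grad_prod w P N x"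
    by (simp_all add: grad_prod_nonneg)
  ultimately show ?thesis
    using assms by (elim insertE emptyE) (simp_all add: grad_prod_self_split)
qed

end

section \<open>The energy of the split\<close>

lemma powr_mult_abs_ln_le:
  fixes a M p :: real
  assumes "0 < a" "a \<le> M" "2 < p"
  shows "a powr (p - 2) * \<bar>ln a\<bar> \<le> 1 / (p - 2) + M powr (p - 1)"
proof (cases "a \<le> 1")
  case True
  define \<epsilon> where "\<epsilon> = p - 2"
  have \<epsilon>: "0 < \<epsilon>" using assms(3) by (simp add: \<epsilon>_def)
  have "- \<epsilon> * ln a \<le> a powr (- \<epsilon>) - 1"
    using ln_le_minus_one[of "a powr (- \<epsilon>)"] assms(1) by (simp add: ln_powr)
  then have "a powr \<epsilon> * (- \<epsilon> * ln a) \<le> a powr \<epsilon> * (a powr (- \<epsilon>) - 1)"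
    by (intro mult_left_mono) auto
  also have "\<dots> \<le> 1"
    using assms(1) by (simp add: right_diff_distrib powr_add[symmetric])
  finally have "a powr \<epsilon> * \<bar>ln a\<bar> \<le> 1 / \<epsilon>"
    using True assms(1) \<epsilon> by (simp add: field_simps abs_if)
  then show ?thesis
    by (simp add: \<epsilon>_def add_increasing2)
next
  case False
  have "a powr (p - 2) * \<bar>ln a\<bar> \<le> a powr (p - 2) * a"
    using False ln_le_minus_one[of a] by (intro mult_left_mono) auto
  also have "\<dots> = a powr (p - 1)"
    using assms(1) powr_add[of a "p - 2" 1] by simp
  also have "\<dots> \<le> M powr (p - 1)"
    using assms by (intro powr_mono2) auto
  finally show ?thesis
    using assms(3) by (simp add: add_increasing)
qed

definition pow_log :: "real \<Rightarrow> real \<Rightarrow> real" where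
  "pow_log p z = (if z = 0 then 0 else \<bar>z\<bar> powr p * ln (z^2))"

lemma abs_powr_eq_mult_square: "\<bar>z\<bar> powr p = \<bar>z\<bar> powr (p - 2) * z^2"
  for z p :: real
proof (cases "z = 0")
  case False
  have "\<bar>z\<bar> powr (p - 2 + 2) = \<bar>z\<bar> powr (p - 2) * \<bar>z\<bar> powr 2"
    by (rule powr_add)
  then show ?thesis
    using False by (simp add: powr_numeral)
qed simp

lemma nonlin_mult_self: "nonlin p z * z = pow_log p z"
  by (simp add: nonlin_def pow_log_def abs_powr_eq_mult_square[of z p] power2_eq_square mult_ac)

lemma pow_log_scale:
  assumes "0 < r"
  shows "pow_log p (r * z) = r powr p * (pow_log p z + ln (r^2) * \<bar>z\<bar> powr p)"
proof (cases "z = 0")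
  case False
  then have "ln ((r * z)^2) = ln (r^2) + ln (z^2)"
    using assms by (simp add: power_mult_distrib ln_mult)
  moreover have "\<bar>r * z\<bar> powr p = r powr p * \<bar>z\<bar> powr p"
    using assms by (simp add: abs_mult powr_mult)
  ultimately show ?thesis
    using False assms by (simp add: pow_log_def algebra_simps)
qed (simp add: pow_log_def)

lemma abs_powr_le_square:
  fixes z M p :: real
  assumes "\<bar>z\<bar> \<le> M" "2 \<le> p"
  shows "\<bar>z\<bar> powr p \<le> M powr (p - 2) * z^2"
  unfolding abs_powr_eq_mult_square[of z p]
  using assms by (intro mult_right_mono powr_mono2) auto

lemma abs_pow_log_le_square:
  fixes z M p :: real
  assumes "\<bar>z\<bar> \<le> M" "2 < p"
  shows "\<bar>pow_log p z\<bar> \<le> 2 * (1 / (p - 2) + M powr (p - 1)) * z^2"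
proof (cases "z = 0")
  case False
  have "ln (z^2) = 2 * ln \<bar>z\<bar>"
    using False ln_realpow[of "\<bar>z\<bar>" 2] by simp
  then have "\<bar>pow_log p z\<bar> = 2 * (\<bar>z\<bar> powr (p - 2) * \<bar>ln \<bar>z\<bar>\<bar>) * z^2"
    using False by (simp add: pow_log_def abs_mult abs_powr_eq_mult_square[of z p])
  also have "\<dots> \<le> 2 * (1 / (p - 2) + M powr (p - 1)) * z^2"
    using False assms powr_mult_abs_ln_le[of "\<bar>z\<bar>" M p] by (intro mult_right_mono mult_left_mono) auto
  finally show ?thesis .
qed (simp add: pow_log_def)

locale sign_split_energy = sign_split w u for w :: "'d::finite lattice \<Rightarrow> 'd lattice \<Rightarrow> real" and u +
  fixes h :: "'d lattice \<Rightarrow> real" and p :: real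
  assumes potential_nonneg: "\<And>x. 0 \<le> h x"
    and potential_summable: "(\<lambda>x. h x * (u x)^2) summable_on UNIV"
    and p_gt_2: "2 < p"
begin

abbreviation "grad_pos \<equiv> \<Sum>\<^sub>\<infinity>x. grad_prod w P P x"
abbreviation "grad_neg \<equiv> \<Sum>\<^sub>\<infinity>x. grad_prod w N N x"
abbreviation "grad_mixed \<equiv> \<Sum>\<^sub>\<infinity>x. grad_prod w P N x"
abbreviation "potential_pos \<equiv> \<Sum>\<^sub>\<infinity>x. h x * (P x)^2"
abbreviation "potential_neg \<equiv> \<Sum>\<^sub>\<infinity>x. h x * (N x)^2"
abbreviation "powr_pos \<equiv> \<Sum>\<^sub>\<infinity>x. \<bar>P x\<bar> powr p"
abbreviation "powr_neg \<equiv> \<Sum>\<^sub>\<infinity>x. \<bar>N x\<bar> powr p"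
abbreviation "pow_log_pos \<equiv> \<Sum>\<^sub>\<infinity>x. pow_log p (P x)"
abbreviation "pow_log_neg \<equiv> \<Sum>\<^sub>\<infinity>x. pow_log p (N x)"

lemma grad_prod_part_summable:
  assumes "f \<in> {P, N}" "g \<in> {P, N}"
  shows "grad_prod w f g summable_on UNIV"
proof -
  have "grad_prod w f g x \<le> W_dens w u x" for x
    using grad_prod_part_le[OF assms, of x] by (simp add: W_dens_def add_increasing2)
  then show ?thesis
    using grad_prod_nonneg[OF assms] by (intro summable_on_comparison_test[OF W_dens_summable])
qed

lemma square_summable: "(\<lambda>x. (u x)^2) summable_on UNIV"
proof -
  have "(u x)^2 \<le> W_dens w u x" for x
    using grad_prod_nonneg[of P P x] grad_prod_nonneg[of N N x] grad_prod_nonneg[of P N x]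
      grad_prod_self_split[of x]
    by (simp add: W_dens_def)
  then show ?thesis
    by (rule summable_on_comparison_test[OF W_dens_summable]) simp
qed

lemma potential_part_summable:
  assumes "f \<in> {P, N}"
  shows "(\<lambda>x. h x * (f x)^2) summable_on UNIV"
  using potential_nonneg square_part_le[OF assms]
  by (intro summable_on_weighted_le[OF potential_summable]) auto

lemma abs_part_le_l2_norm:
  assumes "f \<in> {P, N}"
  shows "\<bar>f x\<bar> \<le> sqrt (\<Sum>\<^sub>\<infinity>y. (u y)^2)"
proof -
  have "\<bar>f x\<bar> \<le> \<bar>u x\<bar>"
    using square_part_le[OF assms] by (simp add: abs_le_square_iff)
  also have "\<dots> \<le> sqrt (\<Sum>\<^sub>\<infinity>y. (u y)^2)"
    by (rule abs_le_sqrt_infsum_square[OF square_summable])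
  finally show ?thesis .
qed

lemma powr_part_summable:
  assumes "f \<in> {P, N}"
  shows "(\<lambda>x. \<bar>f x\<bar> powr p) summable_on UNIV"
proof (rule summable_on_comparison_test[OF summable_on_cmult_right[OF square_summable]])
  let ?M = "sqrt (\<Sum>\<^sub>\<infinity>y. (u y)^2)"
  fix x
  have "\<bar>f x\<bar> powr p \<le> ?M powr (p - 2) * (f x)^2"
    using abs_part_le_l2_norm[OF assms] p_gt_2 by (intro abs_powr_le_square) auto
  also have "\<dots> \<le> ?M powr (p - 2) * (u x)^2"
    using square_part_le[OF assms] by (intro mult_left_mono) auto
  finally show "\<bar>f x\<bar> powr p \<le> ?M powr (p - 2) * (u x)^2" .
qed simp

lemma pow_log_part_summable:
  assumes "f \<in> {P, N}"
  shows "(\<lambda>x. pow_log p (f x)) summable_on UNIV"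
proof (rule summable_on_abs_le[OF summable_on_cmult_right[OF square_summable]])
  define K where "K = 2 * (1 / (p - 2) + sqrt (\<Sum>\<^sub>\<infinity>y. (u y)^2) powr (p - 1))"
  fix x
  have "\<bar>pow_log p (f x)\<bar> \<le> K * (f x)^2"
    unfolding K_def using abs_part_le_l2_norm[OF assms] p_gt_2 by (rule abs_pow_log_le_square)
  also have "\<dots> \<le> K * (u x)^2"
    using square_part_le[OF assms] p_gt_2 by (intro mult_left_mono) (auto simp: K_def)
  finally show "\<bar>pow_log p (f x)\<bar> \<le> K * (u x)^2" .
qed

lemma potential_part_pos:
  assumes "f \<in> {P, N}" "f \<noteq> (\<lambda>x. 0)" "\<And>x. 0 < h x"
  shows "0 < (\<Sum>\<^sub>\<infinity>x. h x * (f x)^2)"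
proof -
  obtain x where "f x \<noteq> 0"
    using assms(2) by auto
  then have "0 < h x * (f x)^2"
    using assms(3) by simp
  also have "\<dots> \<le> (\<Sum>\<^sub>\<infinity>x. h x * (f x)^2)"
    using finite_sum_le_infsum[OF potential_part_summable[OF assms(1)], of "{x}"] potential_nonneg
    by simp
  finally show ?thesis .
qed

lemma nonlin_mult_part:
  assumes "f \<in> {P, N}"
  shows "nonlin p (u x) * f x = pow_log p (f x)"
proof -
  have "f x = u x \<or> f x = 0"
    using assms by (auto simp: pos_part_def neg_part_def)
  then show ?thesis
    by (auto simp: nonlin_mult_self) (simp add: pow_log_def)
qed

context
  fixes r t r' t' :: real and v \<phi> :: "'d lattice \<Rightarrow> real"
  assumes v: "\<And>x. v x = r * P x + t * N x" and \<phi>: "\<And>x. \<phi> x = r' * P x + t' * N x"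
begin

lemma sum_grad_prod_split:
  "(\<Sum>\<^sub>\<infinity>x. grad_prod w v \<phi> x) = r * r' * grad_pos + t * t' * grad_neg + (r * t' + t * r') * grad_mixed"
proof -
  have "((\<lambda>x. grad_prod w v \<phi> x) has_sum
      (r * r' * grad_pos + t * t' * grad_neg + (r * t' + t * r') * grad_mixed)) UNIV"
    unfolding grad_prod_split[OF v \<phi>]
    by (intro has_sum_add has_sum_cmult_right has_sum_infsum grad_prod_part_summable) auto
  then show ?thesis
    by (simp add: has_sum_iff)
qed

lemma H_inner_split:
  "H_inner a w h v \<phi> = a * (r * r' * grad_pos + t * t' * grad_neg + (r * t' + t * r') * grad_mixed)
     + r * r' * potential_pos + t * t' * potential_neg"
proof -
  have "h x * v x * \<phi> x = r * r' * (h x * (P x)^2) + t * t' * (h x * (N x)^2)" for x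
    using pos_part_eq_0_or_neg_part_eq_0[of u x] by (auto simp: v \<phi> power2_eq_square)
  then have "a * grad_prod w v \<phi> x + h x * v x * \<phi> x
      = (a * (r * r')) * grad_prod w P P x + (a * (t * t')) * grad_prod w N N x
        + (a * (r * t' + t * r')) * grad_prod w P N x
        + (r * r') * (h x * (P x)^2) + (t * t') * (h x * (N x)^2)" for x
    by (simp add: grad_prod_split[OF v \<phi>] algebra_simps)
  then have "((\<lambda>x. a * grad_prod w v \<phi> x + h x * v x * \<phi> x) has_sum
      ((a * (r * r')) * grad_pos + (a * (t * t')) * grad_neg + (a * (r * t' + t * r')) * grad_mixed
       + (r * r') * potential_pos + (t * t') * potential_neg)) UNIV"
    by (simp only:) (intro has_sum_add has_sum_cmult_right has_sum_infsum grad_prod_part_summable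
        potential_part_summable; simp)
  then show ?thesis
    unfolding H_inner_def by (simp add: has_sum_iff algebra_simps)
qed

end

context
  fixes r t :: real and v :: "'d lattice \<Rightarrow> real"
  assumes r: "0 < r" and t: "0 < t" and v: "\<And>x. v x = r * P x + t * N x"
begin

lemma powr_split: "(\<Sum>\<^sub>\<infinity>x. \<bar>v x\<bar> powr p) = r powr p * powr_pos + t powr p * powr_neg"
proof -
  have "\<bar>v x\<bar> powr p = r powr p * \<bar>P x\<bar> powr p + t powr p * \<bar>N x\<bar> powr p" for x
    using pos_part_eq_0_or_neg_part_eq_0[of u x] r t by (auto simp: v abs_mult powr_mult)
  then have "((\<lambda>x. \<bar>v x\<bar> powr p) has_sum (r powr p * powr_pos + t powr p * powr_neg)) UNIV"
    by (simp only:) (intro has_sum_add has_sum_cmult_right has_sum_infsum powr_part_summable; simp)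
  then show ?thesis
    by (simp add: has_sum_iff)
qed

lemma pow_log_split:
  "(\<Sum>\<^sub>\<infinity>x. pow_log p (v x))
     = r powr p * (pow_log_pos + ln (r^2) * powr_pos) + t powr p * (pow_log_neg + ln (t^2) * powr_neg)"
proof -
  have "pow_log p (v x) = r powr p * pow_log p (P x) + (r powr p * ln (r^2)) * \<bar>P x\<bar> powr p
      + t powr p * pow_log p (N x) + (t powr p * ln (t^2)) * \<bar>N x\<bar> powr p" for x
    using pos_part_eq_0_or_neg_part_eq_0[of u x]
    by (auto simp: v pow_log_scale r t algebra_simps) (auto simp: pow_log_def)
  then have "((\<lambda>x. pow_log p (v x)) has_sum
      (r powr p * pow_log_pos + (r powr p * ln (r^2)) * powr_pos
       + t powr p * pow_log_neg + (t powr p * ln (t^2)) * powr_neg)) UNIV"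
    by (simp only:) (intro has_sum_add has_sum_cmult_right has_sum_infsum powr_part_summable
        pow_log_part_summable; simp)
  then show ?thesis
    by (simp add: has_sum_iff algebra_simps)
qed

end

lemma J_fun_split:
  assumes r: "0 < r" and t: "0 < t"
  shows "J_fun a b p w h (\<lambda>x. r * P x + t * N x)
    = fibering_map a b p grad_pos grad_neg grad_mixed potential_pos potential_neg
        powr_pos powr_neg pow_log_pos pow_log_neg r t"
proof -
  define v where "v = (\<lambda>x. r * P x + t * N x)"
  have v: "\<And>x. v x = r * P x + t * N x"
    by (simp add: v_def)
  have squares: "r * r = r^2" "t * t = t^2" "r * t + t * r = 2 * r * t"
    by (simp_all add: power2_eq_square)
  have "J_fun a b p w h v = fibering_map a b p grad_pos grad_neg grad_mixed
      potential_pos potential_neg powr_pos powr_neg pow_log_pos pow_log_neg r t"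
    unfolding fibering_map_def
    unfolding J_fun_def grad_norm2_def pow_log_def[symmetric]
      H_inner_split[OF v v] sum_grad_prod_split[OF v v] powr_split[OF r t v] pow_log_split[OF r t v]
      squares ..
  then show ?thesis
    by (simp add: v_def)
qed

lemma J_deriv_pos_part:
  "J_deriv a b p w h u P = a * (grad_pos + grad_mixed) + potential_pos
     + b * (grad_pos + grad_neg + 2 * grad_mixed) * (grad_pos + grad_mixed) - pow_log_pos"
  unfolding J_deriv_def grad_norm2_def H_inner_split[OF self_as_combination pos_part_as_combination]
    sum_grad_prod_split[OF self_as_combination self_as_combination]
    sum_grad_prod_split[OF self_as_combination pos_part_as_combination]
  by (simp add: nonlin_mult_part)

lemma J_deriv_neg_part:
  "J_deriv a b p w h u N = a * (grad_neg + grad_mixed) + potential_neg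
     + b * (grad_pos + grad_neg + 2 * grad_mixed) * (grad_neg + grad_mixed) - pow_log_neg"
  unfolding J_deriv_def grad_norm2_def H_inner_split[OF self_as_combination neg_part_as_combination]
    sum_grad_prod_split[OF self_as_combination self_as_combination]
    sum_grad_prod_split[OF self_as_combination neg_part_as_combination]
  by (simp add: nonlin_mult_part)

end

theorem mainTheorem13:
  fixes s a b p :: real
    and w :: "'d::finite lattice \<Rightarrow> 'd lattice \<Rightarrow> real"
    and h :: "'d lattice \<Rightarrow> real"
    and u :: "'d lattice \<Rightarrow> real"
    and r t :: real
  assumes "0 < s" "s < 1"
    and "frac_weight s w"
    and "0 < a" "0 < b"
    and "p > 6"
    and "\<exists>h0 > 0. \<forall>x. h x \<ge> h0"
    and "u \<in> M_set a b p w h"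
    and "0 < r" "0 < t" "(r, t) \<noteq> (1, 1)"
  shows "J_fun a b p w h u > J_fun a b p w h (\<lambda>x. r * pos_part u x + t * neg_part u x)"
proof -
  have h_pos: "\<And>x. 0 < h x"
    using assms(7) by (auto intro: less_le_trans)
  have u: "u \<in> H_space w h" "pos_part u \<noteq> (\<lambda>x. 0)" "neg_part u \<noteq> (\<lambda>x. 0)"
    "J_deriv a b p w h u (pos_part u) = 0" "J_deriv a b p w h u (neg_part u) = 0"
    using assms(8) by (simp_all add: M_set_def)
  interpret sign_split_energy w u h p
    using assms(3,6) u(1) h_pos by unfold_locales (auto simp: frac_weight_def H_space_def less_imp_le)
  interpret nehari_fibering a b p grad_pos grad_neg grad_mixed potential_pos potential_neg
    powr_pos powr_neg pow_log_pos pow_log_neg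
  proof
    show "0 \<le> grad_pos" "0 \<le> grad_neg" "0 \<le> grad_mixed" "0 \<le> powr_pos" "0 \<le> powr_neg"
      by (simp_all add: infsum_nonneg grad_prod_nonneg)
    show "0 < a * grad_pos + potential_pos" "0 < a * grad_neg + potential_neg"
      using assms(4) u(2,3) h_pos potential_part_pos \<open>0 \<le> grad_pos\<close> \<open>0 \<le> grad_neg\<close>
      by (auto intro: add_nonneg_pos)
  qed (use assms(4-6) u(4,5) J_deriv_pos_part J_deriv_neg_part in simp_all)
  have "J_fun a b p w h u = fiber 1 1"
    using J_fun_split[of 1 1] by (simp add: pos_part_add_neg_part)
  then show ?thesis
    using J_fun_split[OF assms(9,10)] fiber_less_fiber_one_one[OF assms(9-11)] by simp
qed

end
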